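(* Let $(\mathcal{P},\cdot)$ be a finite-dimensional simple admissible Poisson algebra which is not a nilalgebra. Then $\mathcal{P}$ has a unit element $1$ (with $1\cdot x=x\cdot 1=x$ for all $x$).
   Context: $\mathbb{K}$ is a field of characteristic different from $2$ and $3$. Associator: $A(X,Y,Z)=(X\cdot Y)\cdot Z-X\cdot(Y\cdot Z)$. An admissible Poisson algebra is a $\mathbb{K}$-vector space $\mathcal{P}$ with a bilinear product $\cdot$ satisfying $3A(X,Y,Z)=(X\cdot Z)\cdot Y+(Y\cdot Z)\cdot X-(Y\cdot X)\cdot Z-(Z\cdot X)\cdot Y$ for all $X,Y,Z$. $\mathcal{P}$ is simple if it has no two-sided ideals other than $\{0\}$ and $\mathcal{P}$, and $\mathcal{P}\cdot\mathcal{P}\neq\{0\}$. Powers: $X^1=X$, $X^{i+1}=X\cdot X^i$; $\mathcal{P}$ is a nilalgebra if every $X$ satisfies $X^r=0$ for some $r$. *)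

theory Defs
  imports Complex_Main
begin

definition bilinear_product ::
  "('k::field \<Rightarrow> 'v::ab_group_add \<Rightarrow> 'v) \<Rightarrow> ('v \<Rightarrow> 'v \<Rightarrow> 'v) \<Rightarrow> bool" where
  "bilinear_product scale mult \<longleftrightarrow>
     (\<forall>x y z. mult (x + y) z = mult x z + mult y z) \<and>
     (\<forall>x y z. mult x (y + z) = mult x y + mult x z) \<and>
     (\<forall>c x y. mult (scale c x) y = scale c (mult x y)) \<and>
     (\<forall>c x y. mult x (scale c y) = scale c (mult x y))"

definition associator :: "('v::ab_group_add \<Rightarrow> 'v \<Rightarrow> 'v) \<Rightarrow> 'v \<Rightarrow> 'v \<Rightarrow> 'v \<Rightarrow> 'v" where
  "associator mult x y z = mult (mult x y) z - mult x (mult y z)"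

definition admissible_poisson ::
  "('k::field \<Rightarrow> 'v::ab_group_add \<Rightarrow> 'v) \<Rightarrow> ('v \<Rightarrow> 'v \<Rightarrow> 'v) \<Rightarrow> bool" where
  "admissible_poisson scale mult \<longleftrightarrow>
     bilinear_product scale mult \<and>
     (\<forall>x y z. scale 3 (associator mult x y z) =
        mult (mult x z) y + mult (mult y z) x - mult (mult y x) z - mult (mult z x) y)"

definition two_sided_ideal ::
  "('k::field \<Rightarrow> 'v::ab_group_add \<Rightarrow> 'v) \<Rightarrow> ('v \<Rightarrow> 'v \<Rightarrow> 'v) \<Rightarrow> 'v set \<Rightarrow> bool" where
  "two_sided_ideal scale mult I \<longleftrightarrow>
     Modules.module.subspace scale I \<and> (\<forall>x\<in>I. \<forall>y. mult x y \<in> I \<and> mult y x \<in> I)"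

definition simple_algebra ::
  "('k::field \<Rightarrow> 'v::ab_group_add \<Rightarrow> 'v) \<Rightarrow> ('v \<Rightarrow> 'v \<Rightarrow> 'v) \<Rightarrow> bool" where
  "simple_algebra scale mult \<longleftrightarrow>
     (\<forall>I. two_sided_ideal scale mult I \<longrightarrow> I = {0} \<or> I = UNIV) \<and>
     (\<exists>x y. mult x y \<noteq> 0)"

text \<open>Powers: ppow mult X n = X^(n+1), i.e. X^1 = X and X^(i+1) = X * X^i.\<close>
fun ppow :: "('v \<Rightarrow> 'v \<Rightarrow> 'v) \<Rightarrow> 'v \<Rightarrow> nat \<Rightarrow> 'v" where
  "ppow mult X 0 = X"
| "ppow mult X (Suc n) = mult X (ppow mult X n)"

definition nilalgebra :: "('v::zero \<Rightarrow> 'v \<Rightarrow> 'v) \<Rightarrow> bool" where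
  "nilalgebra mult \<longleftrightarrow> (\<forall>X. \<exists>n. ppow mult X n = 0)"

end

theory Submission
  imports Defs
begin

text \<open>Write \<open>a \<circ> b = ab + ba\<close> (\<open>sym_prod\<close>) and \<open>[a, b] = ab - ba\<close> (\<open>commutator\<close>),
  so that \<open>ab = (a \<circ> b + [a, b]) / 2\<close>. Because 3 is invertible, the admissibility identity
  makes \<open>\<circ>\<close> commutative and associative and every \<open>[w, -]\<close> a derivation of \<open>\<circ>\<close>.
  As \<open>[x, x\<^sup>n] = 0\<close>, the powers of \<open>x\<close> for the two products differ by a factor \<open>2\<^sup>n\<close>,
  so a non-nilpotent element stays non-nilpotent for \<open>\<circ>\<close>, and Fitting's lemma in finite
  dimension yields a nonzero \<open>\<circ>\<close>-idempotent \<open>u\<close>. A derivation of a commutative associative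
  algebra kills idempotents, so \<open>[w, u] = 0\<close> for all \<open>w\<close>; then \<open>{y. u \<circ> y = y}\<close> is a
  nonzero two-sided ideal, hence everything, and \<open>2u\<close> is the unit.\<close>

lemma ppow_eq_funpow: "ppow f x n = (f x ^^ n) x"
  by (induction n) simp_all

context vector_space
begin

lemma finite_dimensional_if_finite_span:
  assumes "finite B" "span B = UNIV"
  obtains A where "finite_dimensional_vector_space scale A"
proof -
  obtain A where A: "A \<subseteq> B" "independent A" "B \<subseteq> span A"
    using maximal_independent_subset[of B] by blast
  have "span A = UNIV"
    using assms(2) span_minimal[OF A(3)] by auto
  with A assms(1) have "finite_dimensional_vector_space scale A"
    by unfold_locales (auto intro: finite_subset)
  then show thesis ..
qed

lemma linear_funpow: "Vector_Spaces.linear scale scale f \<Longrightarrow> Vector_Spaces.linear scale scale (f ^^ n)"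
  by (induction n) (simp_all add: linear_id Vector_Spaces.linear_compose)

lemma funpow_range_stabilizes:
  assumes "finite B" "span B = UNIV" and lin: "Vector_Spaces.linear scale scale f"
  shows "\<exists>k. \<forall>m\<ge>k. range (f ^^ m) = range (f ^^ k)"
proof -
  obtain A where "finite_dimensional_vector_space scale A"
    using finite_dimensional_if_finite_span assms(1,2) .
  then interpret finite_dimensional_vector_space scale A .
  define R where "R k = range (f ^^ k)" for k
  have subspace_R: "subspace (R k)" for k
    unfolding R_def using linear_funpow[OF lin] module_hom.subspace_image subspace_UNIV
    by (metis module_hom_iff_linear)
  have R_Suc: "R (Suc m) = f ` R m" for m
    unfolding R_def by (simp add: image_comp)
  obtain k where k: "dim (R k) = (LEAST d. \<exists>k. dim (R k) = d)"
    using LeastI_ex[of "\<lambda>d. \<exists>k. dim (R k) = d"] by blast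
  have "R (Suc k) \<subseteq> R k"
    unfolding R_def by (auto simp del: funpow.simps simp: funpow_Suc_right)
  moreover have "dim (R k) \<le> dim (R (Suc k))"
    unfolding k by (rule Least_le) blast
  ultimately have R_eq: "R (Suc k) = R k"
    using subspace_dim_equal subspace_R by blast
  have "R m = R k" if "m \<ge> k" for m
    using that
  proof (induction m rule: dec_induct)
    case (step m)
    then show ?case using R_Suc R_eq by simp
  qed simp
  then show ?thesis unfolding R_def by blast
qed

end

locale bilinear_algebra = vector_space scale for scale :: "'k::field \<Rightarrow> 'v::ab_group_add \<Rightarrow> 'v" +
  fixes mult :: "'v \<Rightarrow> 'v \<Rightarrow> 'v"
  assumes bilinear: "bilinear_product scale mult"
begin

lemma mult_add_left: "mult (a + b) c = mult a c + mult b c"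
  and mult_add_right: "mult a (b + c) = mult a b + mult a c"
  and mult_scale_left: "mult (scale r a) b = scale r (mult a b)"
  and mult_scale_right: "mult a (scale r b) = scale r (mult a b)"
  using bilinear unfolding bilinear_product_def by blast+

lemma linear_mult_left: "Vector_Spaces.linear scale scale (mult a)"
  by (simp add: Vector_Spaces.linear_iff vector_space_axioms mult_add_right mult_scale_right)

lemma additive_mult_left: "additive (\<lambda>a. mult a b)"
  and additive_mult_right: "additive (mult a)"
  by (simp_all add: additive_def mult_add_left mult_add_right)

lemmas mult_zero_left [simp] = additive.zero[OF additive_mult_left]
  and mult_zero_right [simp] = additive.zero[OF additive_mult_right]
  and mult_diff_left = additive.diff[OF additive_mult_left]
  and mult_diff_right = additive.diff[OF additive_mult_right]

end

locale comm_assoc_algebra = bilinear_algebra +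
  assumes mult_commute: "mult a b = mult b a"
    and mult_assoc: "mult (mult a b) c = mult a (mult b c)"
begin

lemma mult_left_commute: "mult a (mult b c) = mult b (mult a c)"
  by (metis mult_assoc mult_commute)

lemmas mult_ac = mult_assoc mult_commute mult_left_commute

lemma funpow_mult_eq_mult_ppow: "(mult x ^^ Suc k) z = mult (ppow mult x k) z"
  by (induction k) (simp_all add: mult_assoc)

lemma ppow_Suc_add: "ppow mult x (Suc (i + j)) = mult (ppow mult x i) (ppow mult x j)"
  by (simp only: ppow_eq_funpow add_Suc[symmetric] funpow_add comp_apply funpow_mult_eq_mult_ppow)

lemma idempotent_if_not_nilalgebra:
  assumes "finite B" "span B = UNIV" and "\<not> nilalgebra mult"
  obtains u where "u \<noteq> 0" "mult u u = u"
proof -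
  obtain x where x: "ppow mult x n \<noteq> 0" for n
    using assms(3) unfolding nilalgebra_def by blast
  obtain k where k: "\<forall>m\<ge>k. range (mult x ^^ m) = range (mult x ^^ k)"
    using funpow_range_stabilizes[OF assms(1,2) linear_mult_left] by blast
  txt \<open>\<open>a = x\<^sup>k\<^sup>+\<^sup>1\<close> lies in the stable image, so \<open>a = a\<^sup>2 z\<close>; then \<open>u = az\<close> is idempotent
    and \<open>au = a\<close>.\<close>
  define a where "a = ppow mult x k"
  have "a \<in> range (mult x ^^ Suc (Suc (k + k)))"
    using k unfolding a_def ppow_eq_funpow by (metis le_add1 add_Suc_right rangeI)
  then obtain z where "a = (mult x ^^ Suc (Suc (k + k))) z"
    by blast
  then have az: "a = mult (mult a a) z"
    by (simp only: funpow_mult_eq_mult_ppow ppow_Suc_add a_def)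
  define u where "u = mult a z"
  have "mult u u = mult (mult (mult a a) z) z"
    unfolding u_def by (simp only: mult_ac)
  also have "\<dots> = u"
    unfolding u_def by (simp only: az[symmetric])
  finally have idem: "mult u u = u" .
  moreover have "mult a u = a"
    unfolding u_def by (simp only: mult_assoc[symmetric] az[symmetric])
  moreover have "a \<noteq> 0"
    using x unfolding a_def by simp
  ultimately have "u \<noteq> 0"
    by (metis mult_zero_right)
  with idem show thesis
    using that by blast
qed

lemma derivation_idempotent_eq_0:
  assumes leibniz: "\<And>a b. D (mult a b) = mult (D a) b + mult a (D b)"
    and idem: "mult u u = u"
  shows "D u = 0"
proof -
  have Du: "D u = mult u (D u) + mult u (D u)"
    using leibniz[of u u] by (simp add: idem mult_commute)
  have "mult u (D u) = mult (mult u u) (D u) + mult (mult u u) (D u)"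
    by (subst (1) Du) (simp only: mult_add_right mult_assoc)
  then have "mult u (D u) = mult u (D u) + mult u (D u)"
    by (simp only: idem)
  then have "mult u (D u) = 0"
    by simp
  from Du[unfolded this] show ?thesis
    by simp
qed

end

locale admissible_poisson_algebra = vector_space scale
  for scale :: "'k::field \<Rightarrow> 'v::ab_group_add \<Rightarrow> 'v" +
  fixes mult :: "'v \<Rightarrow> 'v \<Rightarrow> 'v"
  assumes admissible: "admissible_poisson scale mult"
    and two_neq_zero: "(2::'k) \<noteq> 0"
    and three_neq_zero: "(3::'k) \<noteq> 0"
begin

sublocale bilinear_algebra scale mult
  using admissible by unfold_locales (simp add: admissible_poisson_def)

definition sym_prod :: "'v \<Rightarrow> 'v \<Rightarrow> 'v" where
  "sym_prod a b = mult a b + mult b a"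

definition commutator :: "'v \<Rightarrow> 'v \<Rightarrow> 'v" where
  "commutator a b = mult a b - mult b a"

text \<open>The defining identity reads \<open>admissible_defect x y z = 0\<close>; the two identities below are
  integer combinations of its instances.\<close>
definition admissible_defect :: "'v \<Rightarrow> 'v \<Rightarrow> 'v \<Rightarrow> 'v" where
  "admissible_defect x y z = scale 3 (associator mult x y z)
     - (mult (mult x z) y + mult (mult y z) x - mult (mult y x) z - mult (mult z x) y)"

lemma admissible_defect_eq_0 [simp]: "admissible_defect x y z = 0"
  using admissible unfolding admissible_poisson_def admissible_defect_def by simp

lemma scale_three: "scale 3 v = v + v + v"
  using scale_left_distrib[of 2 1 v] scale_left_distrib[of 1 1 v] by (simp add: numeral_eq_Suc)

lemma sym_prod_assoc: "sym_prod (sym_prod x y) z = sym_prod x (sym_prod y z)"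
proof -
  have "scale 3 (sym_prod (sym_prod x y) z - sym_prod x (sym_prod y z)) =
      admissible_defect x y z + admissible_defect x z y
    - admissible_defect z x y - admissible_defect z y x"
    unfolding sym_prod_def admissible_defect_def associator_def scale_three
      mult_add_left mult_add_right
    by (simp add: algebra_simps)
  then show ?thesis
    using three_neq_zero by simp
qed

lemma commutator_sym_prod:
  "commutator x (sym_prod y z) = sym_prod (commutator x y) z + sym_prod y (commutator x z)"
proof -
  have "scale 3 (commutator x (sym_prod y z) - (sym_prod (commutator x y) z + sym_prod y (commutator x z))) =
    - admissible_defect x y z - admissible_defect x z y + admissible_defect y x z
    - admissible_defect y z x + admissible_defect z x y - admissible_defect z y x"
    unfolding sym_prod_def commutator_def admissible_defect_def associator_def scale_three
      mult_add_left mult_add_right mult_diff_left mult_diff_right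
    by (simp add: algebra_simps)
  then show ?thesis
    using three_neq_zero by simp
qed

sublocale sym: comm_assoc_algebra scale sym_prod
proof
  show "bilinear_product scale sym_prod"
    unfolding bilinear_product_def sym_prod_def
    by (simp add: mult_add_left mult_add_right mult_scale_left mult_scale_right scale_right_distrib)
  show "sym_prod a b = sym_prod b a" for a b
    unfolding sym_prod_def by (rule add.commute)
  show "sym_prod (sym_prod a b) c = sym_prod a (sym_prod b c)" for a b c
    by (rule sym_prod_assoc)
qed

lemma half_add_half: "scale (1/2) v + scale (1/2) v = v"
  using two_neq_zero by (simp flip: scale_left_distrib add: field_simps)

lemma mult_eq_half_sym_prod_commutator: "mult a b = scale (1/2) (sym_prod a b + commutator a b)"
proof -
  have "sym_prod a b + commutator a b = mult a b + mult a b"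
    unfolding sym_prod_def commutator_def by simp
  then show ?thesis
    by (simp add: scale_right_distrib half_add_half)
qed

lemma commutator_antisym: "commutator a b = - commutator b a"
  unfolding commutator_def by simp

lemma commutator_self [simp]: "commutator a a = 0"
  unfolding commutator_def by simp

lemma commutator_ppow_sym_prod: "commutator x (ppow sym_prod x n) = 0"
  by (induction n) (simp_all add: commutator_sym_prod)

lemma ppow_eq_scale_ppow_sym_prod: "ppow mult x n = scale ((1/2)^n) (ppow sym_prod x n)"
proof (induction n)
  case (Suc n)
  have "ppow mult x (Suc n) = scale ((1/2)^n) (mult x (ppow sym_prod x n))"
    by (simp add: Suc mult_scale_right)
  also have "mult x (ppow sym_prod x n) = scale (1/2) (ppow sym_prod x (Suc n))"
    by (simp add: mult_eq_half_sym_prod_commutator commutator_ppow_sym_prod)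
  finally show ?case
    by (simp add: mult.commute)
qed simp

lemma nilalgebra_sym_prod_iff: "nilalgebra sym_prod \<longleftrightarrow> nilalgebra mult"
  unfolding nilalgebra_def ppow_eq_scale_ppow_sym_prod using two_neq_zero by simp

lemma commutator_sym_idempotent_eq_0:
  assumes "sym_prod u u = u"
  shows "commutator w u = 0"
  using sym.derivation_idempotent_eq_0[OF commutator_sym_prod assms] .

lemma two_sided_ideal_sym_prod_fixed:
  assumes idem: "sym_prod u u = u"
  shows "two_sided_ideal scale mult {y. sym_prod u y = y}" (is "two_sided_ideal _ _ ?I")
proof -
  have subspace: "subspace ?I"
    unfolding subspace_def by (simp add: sym.mult_add_right sym.mult_scale_right)
  have sym_prod_in: "sym_prod y w \<in> ?I" if "y \<in> ?I" for y w
    using that by (simp flip: sym.mult_assoc)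
  have commutator_in: "commutator w y \<in> ?I" if "y \<in> ?I" for y w
  proof -
    have "sym_prod u (commutator w y) = commutator w (sym_prod u y)"
      by (simp add: commutator_sym_prod commutator_sym_idempotent_eq_0[OF idem])
    also have "\<dots> = commutator w y"
      using that by simp
    finally show ?thesis
      by simp
  qed
  have "mult y w \<in> ?I \<and> mult w y \<in> ?I" if y: "y \<in> ?I" for y w
  proof
    have "commutator y w \<in> ?I"
      using subspace_neg[OF subspace commutator_in[OF y]] by (simp flip: commutator_antisym)
    then show "mult y w \<in> ?I"
      unfolding mult_eq_half_sym_prod_commutator[of y w]
      by (intro subspace_scale[OF subspace] subspace_add[OF subspace] sym_prod_in[OF y])
    show "mult w y \<in> ?I"
      unfolding mult_eq_half_sym_prod_commutator[of w y] sym.mult_commute[of w y]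
      by (intro subspace_scale[OF subspace] subspace_add[OF subspace] sym_prod_in[OF y]
          commutator_in[OF y])
  qed
  with subspace show ?thesis
    unfolding two_sided_ideal_def by blast
qed

lemma unit_if_sym_idempotent:
  assumes simple: "simple_algebra scale mult" and "u \<noteq> 0" and idem: "sym_prod u u = u"
  shows "mult (u + u) y = y \<and> mult y (u + u) = y"
proof -
  have "{y. sym_prod u y = y} = {0} \<or> {y. sym_prod u y = y} = UNIV"
    using simple two_sided_ideal_sym_prod_fixed[OF idem] unfolding simple_algebra_def by blast
  then have "{y. sym_prod u y = y} = UNIV"
    using idem \<open>u \<noteq> 0\<close> by auto
  then have "sym_prod u y = y" for y
    by blast
  moreover have "commutator u y = 0" for y
    using commutator_antisym[of u y] commutator_sym_idempotent_eq_0[OF idem, of y] by simp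
  ultimately have "mult u y = scale (1/2) y" "mult y u = scale (1/2) y" for y
    using mult_eq_half_sym_prod_commutator[of u y] mult_eq_half_sym_prod_commutator[of y u]
    by (simp_all add: sym.mult_commute[of y u] commutator_antisym[of y u])
  then show ?thesis
    by (simp add: mult_add_left mult_add_right half_add_half)
qed

end

theorem mainTheorem11:
  fixes scale :: "'k::field \<Rightarrow> 'v::ab_group_add \<Rightarrow> 'v"
    and mult :: "'v \<Rightarrow> 'v \<Rightarrow> 'v"
  assumes char2: "(2::'k) \<noteq> 0" and char3: "(3::'k) \<noteq> 0"
    and vs: "vector_space scale"
    and fin: "\<exists>B. finite B \<and> Modules.module.span scale B = UNIV"
    and adm: "admissible_poisson scale mult"
    and simple: "simple_algebra scale mult"
    and notnil: "\<not> nilalgebra mult"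
  shows "\<exists>e. \<forall>x. mult e x = x \<and> mult x e = x"
proof -
  interpret admissible_poisson_algebra scale mult
    using vs adm char2 char3
    by (simp add: admissible_poisson_algebra_def admissible_poisson_algebra_axioms_def)
  obtain B where "finite B" "span B = UNIV"
    using fin by blast
  moreover have "\<not> nilalgebra sym_prod"
    using notnil nilalgebra_sym_prod_iff by blast
  ultimately obtain u where "u \<noteq> 0" "sym_prod u u = u"
    by (rule sym.idempotent_if_not_nilalgebra)
  then show ?thesis
    using unit_if_sym_idempotent[OF simple] by blast
qed

end
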